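(* Let $\xi,\eta,\zeta\colon\mathbb{R}\times(-\infty,\infty]\to\mathbb{R}$ be multiplicity functions, each with finite support avoiding the diagonal $\Delta=\{(x_1,x_2):x_1=x_2\}$. Then: (positivity) $W_1^{\pm}(\xi,\eta)\ge0$, and $W_1^{\pm}(\xi,\eta)>0$ if and only if $\xi\ne\eta$; (symmetry) $W_1^{\pm}(\xi,\eta)=W_1^{\pm}(\eta,\xi)$; (triangle inequality) $W_1^{\pm}(\xi,\eta)+W_1^{\pm}(\eta,\zeta)\ge W_1^{\pm}(\xi,\zeta)$.
   Context: The support of $f$ is the set of points where $f\ne0$. For $x=(x_1,x_2),y=(y_1,y_2)\in\mathbb{R}\times(-\infty,\infty]$ let $\|x-y\|_1=|x_1-y_1|+|x_2-y_2|$ (with $|\infty-\infty|=0$ and $|\infty-a|=\infty$ for real $a$) and $\delta(x)=|x_2-x_1|$. For non-negative $\xi,\eta$ with finite supports, the $1$-Wasserstein distance is $W_1(\xi,\eta)=\inf_{T,X,Y}\big[\sum_{x,y}T(x,y)\|x-y\|_1+\sum_xX(x)\delta(x)+\sum_yY(y)\delta(y)\big]$ over $T\colon\mathrm{supp}\,\xi\times\mathrm{supp}\,\eta\to[0,\infty)$, $X\colon\mathrm{supp}\,\xi\to[0,\infty)$, $Y\colon\mathrm{supp}\,\eta\to[0,\infty)$ with $X(x)+\sum_{y}T(x,y)=\xi(x)$ and $Y(y)+\sum_xT(x,y)=\eta(y)$ for all $x\in\mathrm{supp}\,\xi$, $y\in\mathrm{supp}\,\eta$. For arbitrary $\xi=\xi^+-\xi^-$,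 $\eta=\eta^+-\eta^-$ with $\xi^\pm,\eta^\pm$ non-negative, the alternating $1$-Wasserstein distance is $W_1^{\pm}(\xi,\eta)=W_1(\xi^++\eta^-,\xi^-+\eta^+)$ (independent of the decomposition). Values $\infty$ are allowed (extended metric). *)

theory Defs
  imports "HOL-Analysis.Analysis" "HOL-Library.Extended_Real"
begin

text \<open>Points of R x (-infinity, infinity]: pairs (x1, x2) with x2 an extended real;
  the value -infinity is excluded by the support hypotheses below.\<close>
type_synonym pt = "real \<times> ereal"

definition supp :: "(pt \<Rightarrow> real) \<Rightarrow> pt set" where
  "supp f = {x. f x \<noteq> 0}"

text \<open>l1 distance with |inf - inf| = 0 and |inf - a| = inf.\<close>
definition dist1 :: "pt \<Rightarrow> pt \<Rightarrow> ereal" where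
  "dist1 x y = ereal \<bar>fst x - fst y\<bar> +
     (if snd x = snd y then 0 else \<bar>snd x - snd y\<bar>)"

definition delta :: "pt \<Rightarrow> ereal" where
  "delta x = \<bar>snd x - ereal (fst x)\<bar>"

definition W1 :: "(pt \<Rightarrow> real) \<Rightarrow> (pt \<Rightarrow> real) \<Rightarrow> ereal" where
  "W1 \<xi> \<eta> = Inf {(\<Sum>(x,y)\<in>supp \<xi> \<times> supp \<eta>. ereal (T x y) * dist1 x y)
                  + (\<Sum>x\<in>supp \<xi>. ereal (X x) * delta x)
                  + (\<Sum>y\<in>supp \<eta>. ereal (Y y) * delta y) | T X Y.
        (\<forall>x\<in>supp \<xi>. \<forall>y\<in>supp \<eta>. T x y \<ge> 0) \<and>
        (\<forall>x\<in>supp \<xi>. X x \<ge> 0) \<and> (\<forall>y\<in>supp \<eta>. Y y \<ge> 0) \<and>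
        (\<forall>x\<in>supp \<xi>. X x + (\<Sum>y\<in>supp \<eta>. T x y) = \<xi> x) \<and>
        (\<forall>y\<in>supp \<eta>. Y y + (\<Sum>x\<in>supp \<xi>. T x y) = \<eta> y)}"

definition pospart :: "(pt \<Rightarrow> real) \<Rightarrow> pt \<Rightarrow> real" where
  "pospart f = (\<lambda>x. max (f x) 0)"

definition negpart :: "(pt \<Rightarrow> real) \<Rightarrow> pt \<Rightarrow> real" where
  "negpart f = (\<lambda>x. max (- f x) 0)"

definition W1pm :: "(pt \<Rightarrow> real) \<Rightarrow> (pt \<Rightarrow> real) \<Rightarrow> ereal" where
  "W1pm \<xi> \<eta> = W1 (\<lambda>x. pospart \<xi> x + negpart \<eta> x) (\<lambda>x. negpart \<xi> x + pospart \<eta> x)"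

definition admissible :: "(pt \<Rightarrow> real) \<Rightarrow> bool" where
  "admissible f \<longleftrightarrow> finite (supp f) \<and>
     (\<forall>x\<in>supp f. snd x \<noteq> -\<infinity> \<and> snd x \<noteq> ereal (fst x))"

end

theory Submission
  imports Defs
begin

(*
  On a common finite support, W1 is an infimum of costs of transport plans in which the diagonal
  acts as an unlimited source and sink. Transposing plans gives symmetry, and surplus mass at an
  off-diagonal point has to travel a positive distance, which gives positivity. Adding plans shows
  that W1 is subadditive, so the triangle inequality reduces to cancellation,
  W1(\<mu> + \<kappa>, \<nu> + \<kappa>) \<ge> W1(\<mu>, \<nu>) for \<kappa> \<ge> 0, applied with \<kappa> = |\<eta>|:
  \<xi>\<^sup>+ + \<zeta>\<^sup>- + |\<eta>| = (\<xi>\<^sup>+ + \<eta>\<^sup>-) + (\<eta>\<^sup>+ + \<zeta>\<^sup>-).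
  Cancellation is proved one point p at a time. Given a plan from \<mu> + c\<delta>\<^sub>p to \<nu> + c\<delta>\<^sub>p,
  the mass c passing through p is taken out, and the removed inflow from each x (or from the
  diagonal) is sent straight to each y (or to the diagonal) that received outflow from p, in
  proportion to both flows. By the triangle inequality through p the cost does not increase.
*)

section \<open>Distances to points and to the diagonal\<close>

lemma dist1_nonneg: "0 \<le> dist1 x y"
  unfolding dist1_def by (auto intro: add_nonneg_nonneg)

lemma dist1_self [simp]: "dist1 x x = 0"
  unfolding dist1_def by simp

lemma dist1_commute: "dist1 x y = dist1 y x"
  unfolding dist1_def by (cases "snd x"; cases "snd y") (auto simp: abs_minus_commute)

lemma dist1_pos: "x \<noteq> y \<Longrightarrow> 0 < dist1 x y"
  unfolding dist1_def by (cases x; cases y; cases "snd x"; cases "snd y") auto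

lemma dist1_triangle: "dist1 x z \<le> dist1 x y + dist1 y z"
proof -
  have snd_triangle: "(if a = c then 0 else \<bar>a - c\<bar>)
      \<le> (if a = b then 0 else \<bar>a - b\<bar>) + (if b = c then 0 else \<bar>b - c\<bar>)" for a b c :: ereal
    by (cases a; cases b; cases c) auto
  have "ereal \<bar>fst x - fst z\<bar> \<le> ereal \<bar>fst x - fst y\<bar> + ereal \<bar>fst y - fst z\<bar>"
    by simp
  then show ?thesis
    unfolding dist1_def using snd_triangle[of "snd x" "snd z" "snd y"]
    by (smt (verit) add.assoc add.commute add_mono)
qed

lemma delta_nonneg: "0 \<le> delta x"
  unfolding delta_def by simp

lemma delta_pos: "snd x \<noteq> ereal (fst x) \<Longrightarrow> 0 < delta x"
  unfolding delta_def by (cases "snd x") auto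

lemma delta_le_dist1_add: "delta x \<le> dist1 x y + delta y"
  unfolding delta_def dist1_def
  by (cases "snd x"; cases "snd y") (auto simp: abs_ereal.simps)

(* Costs are computed in ennreal, where sums of products of nonnegative terms can be rearranged
   freely. *)

definition edist1 :: "pt \<Rightarrow> pt \<Rightarrow> ennreal" where
  "edist1 x y = e2ennreal (dist1 x y)"

definition edelta :: "pt \<Rightarrow> ennreal" where
  "edelta x = e2ennreal (delta x)"

lemma e2ennreal_add: "0 \<le> a \<Longrightarrow> 0 \<le> b \<Longrightarrow> e2ennreal (a + b) = e2ennreal a + e2ennreal b"
  by (metis e2ennreal_enn2ereal enn2ereal_e2ennreal plus_ennreal.rep_eq)

lemma e2ennreal_pos: "0 < a \<Longrightarrow> 0 < e2ennreal a"
  by (cases a) auto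

lemma edist1_self [simp]: "edist1 x x = 0"
  unfolding edist1_def by (simp add: e2ennreal_neg)

lemma edist1_commute: "edist1 x y = edist1 y x"
  unfolding edist1_def by (simp add: dist1_commute)

lemma edist1_eq_0_iff [simp]: "edist1 x y = 0 \<longleftrightarrow> x = y"
  using dist1_pos[of x y] e2ennreal_pos[of "dist1 x y"] unfolding edist1_def
  by (cases "x = y") (auto simp: e2ennreal_neg)

lemma edelta_pos: "snd x \<noteq> ereal (fst x) \<Longrightarrow> 0 < edelta x"
  unfolding edelta_def by (simp add: delta_pos e2ennreal_pos)

lemma edist1_triangle: "edist1 x z \<le> edist1 x y + edist1 y z"
  unfolding edist1_def
  by (metis dist1_triangle dist1_nonneg e2ennreal_add e2ennreal_mono)

lemma edelta_le_edist1_add: "edelta x \<le> edist1 x y + edelta y"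
  unfolding edist1_def edelta_def
  by (metis delta_le_dist1_add dist1_nonneg delta_nonneg e2ennreal_add e2ennreal_mono)

lemma edelta_le_add_edist1: "edelta y \<le> edelta x + edist1 x y"
  using edelta_le_edist1_add[of y x] by (simp add: edist1_commute add.commute)

section \<open>Transport plans on finite sets\<close>

definition transport_plan :: "pt set \<Rightarrow> pt set \<Rightarrow> (pt \<Rightarrow> real) \<Rightarrow> (pt \<Rightarrow> real) \<Rightarrow>
    (pt \<Rightarrow> pt \<Rightarrow> real) \<Rightarrow> (pt \<Rightarrow> real) \<Rightarrow> (pt \<Rightarrow> real) \<Rightarrow> bool" where
  "transport_plan A B \<mu> \<nu> T X Y \<longleftrightarrow>
     (\<forall>x\<in>A. \<forall>y\<in>B. 0 \<le> T x y) \<and> (\<forall>x\<in>A. 0 \<le> X x) \<and> (\<forall>y\<in>B. 0 \<le> Y y) \<and>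
     (\<forall>x\<in>A. X x + (\<Sum>y\<in>B. T x y) = \<mu> x) \<and> (\<forall>y\<in>B. Y y + (\<Sum>x\<in>A. T x y) = \<nu> y)"

lemma transport_planI:
  assumes "\<And>x y. x \<in> A \<Longrightarrow> y \<in> B \<Longrightarrow> 0 \<le> T x y" "\<And>x. x \<in> A \<Longrightarrow> 0 \<le> X x"
    "\<And>y. y \<in> B \<Longrightarrow> 0 \<le> Y y" "\<And>x. x \<in> A \<Longrightarrow> X x + (\<Sum>y\<in>B. T x y) = \<mu> x"
    "\<And>y. y \<in> B \<Longrightarrow> Y y + (\<Sum>x\<in>A. T x y) = \<nu> y"
  shows "transport_plan A B \<mu> \<nu> T X Y"
  using assms unfolding transport_plan_def by blast

lemma transport_planD:
  assumes "transport_plan A B \<mu> \<nu> T X Y"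
  shows "\<And>x y. x \<in> A \<Longrightarrow> y \<in> B \<Longrightarrow> 0 \<le> T x y" "\<And>x. x \<in> A \<Longrightarrow> 0 \<le> X x"
    "\<And>y. y \<in> B \<Longrightarrow> 0 \<le> Y y" "\<And>x. x \<in> A \<Longrightarrow> X x + (\<Sum>y\<in>B. T x y) = \<mu> x"
    "\<And>y. y \<in> B \<Longrightarrow> Y y + (\<Sum>x\<in>A. T x y) = \<nu> y"
  using assms unfolding transport_plan_def by blast+

definition transport_cost :: "pt set \<Rightarrow> pt set \<Rightarrow>
    (pt \<Rightarrow> pt \<Rightarrow> real) \<Rightarrow> (pt \<Rightarrow> real) \<Rightarrow> (pt \<Rightarrow> real) \<Rightarrow> ennreal" where
  "transport_cost A B T X Y = (\<Sum>(x,y)\<in>A \<times> B. ennreal (T x y) * edist1 x y)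
     + (\<Sum>x\<in>A. ennreal (X x) * edelta x) + (\<Sum>y\<in>B. ennreal (Y y) * edelta y)"

definition W1_on :: "pt set \<Rightarrow> pt set \<Rightarrow> (pt \<Rightarrow> real) \<Rightarrow> (pt \<Rightarrow> real) \<Rightarrow> ennreal" where
  "W1_on A B \<mu> \<nu> = Inf {transport_cost A B T X Y | T X Y. transport_plan A B \<mu> \<nu> T X Y}"

lemma W1_on_le_cost:
  "transport_plan A B \<mu> \<nu> T X Y \<Longrightarrow> W1_on A B \<mu> \<nu> \<le> transport_cost A B T X Y"
  unfolding W1_on_def by (rule Inf_lower) blast

lemma W1_on_greatest:
  "(\<And>T X Y. transport_plan A B \<mu> \<nu> T X Y \<Longrightarrow> c \<le> transport_cost A B T X Y) \<Longrightarrow> c \<le> W1_on A B \<mu> \<nu>"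
  unfolding W1_on_def by (rule Inf_greatest) blast

lemma sum_ereal_mult_eq_enn2ereal:
  assumes "\<And>i. i \<in> I \<Longrightarrow> 0 \<le> t i" "\<And>i. 0 \<le> d i"
  shows "(\<Sum>i\<in>I. ereal (t i) * d i) = enn2ereal (\<Sum>i\<in>I. ennreal (t i) * e2ennreal (d i))"
  using assms by (simp add: times_ennreal.rep_eq enn2ereal_e2ennreal flip: sum_enn2ereal)

lemma ereal_cost_eq_transport_cost:
  assumes "transport_plan A B \<mu> \<nu> T X Y"
  shows "(\<Sum>(x,y)\<in>A \<times> B. ereal (T x y) * dist1 x y) + (\<Sum>x\<in>A. ereal (X x) * delta x)
     + (\<Sum>y\<in>B. ereal (Y y) * delta y) = enn2ereal (transport_cost A B T X Y)"
proof -
  have "(\<Sum>(x,y)\<in>A \<times> B. ereal (T x y) * dist1 x y)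
      = enn2ereal (\<Sum>(x,y)\<in>A \<times> B. ennreal (T x y) * edist1 x y)"
    unfolding edist1_def split_def
    by (rule sum_ereal_mult_eq_enn2ereal) (use assms in \<open>auto simp: dist1_nonneg transport_plan_def\<close>)
  moreover have "(\<Sum>x\<in>A. ereal (X x) * delta x) = enn2ereal (\<Sum>x\<in>A. ennreal (X x) * edelta x)"
    unfolding edelta_def using assms
    by (intro sum_ereal_mult_eq_enn2ereal) (auto simp: delta_nonneg transport_plan_def)
  moreover have "(\<Sum>y\<in>B. ereal (Y y) * delta y) = enn2ereal (\<Sum>y\<in>B. ennreal (Y y) * edelta y)"
    unfolding edelta_def using assms
    by (intro sum_ereal_mult_eq_enn2ereal) (auto simp: delta_nonneg transport_plan_def)
  ultimately show ?thesis
    unfolding transport_cost_def by (simp only: plus_ennreal.rep_eq)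
qed

lemma W1_eq_W1_on: "W1 \<mu> \<nu> = enn2ereal (W1_on (supp \<mu>) (supp \<nu>) \<mu> \<nu>)"
proof -
  let ?A = "supp \<mu>" and ?B = "supp \<nu>"
  have "{(\<Sum>(x,y)\<in>?A \<times> ?B. ereal (T x y) * dist1 x y) + (\<Sum>x\<in>?A. ereal (X x) * delta x)
          + (\<Sum>y\<in>?B. ereal (Y y) * delta y) | T X Y. transport_plan ?A ?B \<mu> \<nu> T X Y}
      = enn2ereal ` {transport_cost ?A ?B T X Y | T X Y. transport_plan ?A ?B \<mu> \<nu> T X Y}"
    (is "?L = enn2ereal ` ?R")
  proof (intro equalityI subsetI)
    fix z assume "z \<in> ?L"
    then show "z \<in> enn2ereal ` ?R"
      using ereal_cost_eq_transport_cost by blast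
  next
    fix z assume "z \<in> enn2ereal ` ?R"
    then obtain T X Y where plan: "transport_plan ?A ?B \<mu> \<nu> T X Y"
      and "z = enn2ereal (transport_cost ?A ?B T X Y)" by blast
    then have "z = (\<Sum>(x,y)\<in>?A \<times> ?B. ereal (T x y) * dist1 x y) + (\<Sum>x\<in>?A. ereal (X x) * delta x)
        + (\<Sum>y\<in>?B. ereal (Y y) * delta y)"
      using ereal_cost_eq_transport_cost by simp
    with plan show "z \<in> ?L" by blast
  qed
  then show ?thesis
    unfolding W1_def W1_on_def transport_plan_def by (simp add: Inf_ennreal.rep_eq)
qed

lemma sum_product_mono_neutral_cong:
  assumes "finite A'" "finite B'" "A \<subseteq> A'" "B \<subseteq> B'"
    and "\<And>x y. x \<in> A' \<Longrightarrow> y \<in> B' \<Longrightarrow> x \<notin> A \<or> y \<notin> B \<Longrightarrow> f x y = 0"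
    and "\<And>x y. x \<in> A \<Longrightarrow> y \<in> B \<Longrightarrow> f x y = g x y"
  shows "(\<Sum>(x,y)\<in>A' \<times> B'. f x y) = (\<Sum>(x,y)\<in>A \<times> B. g x y)"
  by (rule sum.mono_neutral_cong_right) (use assms in auto)

lemma transport_plan_extend:
  assumes fin: "finite A'" "finite B'" and sub: "A \<subseteq> A'" "B \<subseteq> B'"
    and supp: "supp \<mu> \<subseteq> A" "supp \<nu> \<subseteq> B" and plan: "transport_plan A B \<mu> \<nu> T X Y"
  defines "T' \<equiv> \<lambda>x y. if x \<in> A \<and> y \<in> B then T x y else 0"
    and "X' \<equiv> \<lambda>x. if x \<in> A then X x else 0" and "Y' \<equiv> \<lambda>y. if y \<in> B then Y y else 0"
  shows "transport_plan A' B' \<mu> \<nu> T' X' Y' \<and> transport_cost A' B' T' X' Y' = transport_cost A B T X Y"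
proof -
  have row: "X' x + (\<Sum>y\<in>B'. T' x y) = \<mu> x" if "x \<in> A'" for x
  proof (cases "x \<in> A")
    case True
    have "(\<Sum>y\<in>B'. T' x y) = (\<Sum>y\<in>B. T x y)"
      by (rule sum.mono_neutral_cong_right) (use fin sub True in \<open>auto simp: T'_def\<close>)
    then show ?thesis using plan True unfolding transport_plan_def X'_def by auto
  next
    case False
    then show ?thesis using supp by (auto simp: X'_def T'_def supp_def)
  qed
  have col: "Y' y + (\<Sum>x\<in>A'. T' x y) = \<nu> y" if "y \<in> B'" for y
  proof (cases "y \<in> B")
    case True
    have "(\<Sum>x\<in>A'. T' x y) = (\<Sum>x\<in>A. T x y)"
      by (rule sum.mono_neutral_cong_right) (use fin sub True in \<open>auto simp: T'_def\<close>)
    then show ?thesis using plan True unfolding transport_plan_def Y'_def by auto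
  next
    case False
    then show ?thesis using supp by (auto simp: Y'_def T'_def supp_def)
  qed
  have "transport_cost A' B' T' X' Y' = transport_cost A B T X Y"
    unfolding transport_cost_def
    by (intro arg_cong2[where f = "(+)"] sum_product_mono_neutral_cong sum.mono_neutral_cong_right)
      (use fin sub in \<open>auto simp: T'_def X'_def Y'_def\<close>)
  with plan row col show ?thesis
    unfolding transport_plan_def T'_def X'_def Y'_def by auto
qed

lemma add_sum_nonneg_eq_0_iff:
  fixes f :: "'a \<Rightarrow> real"
  assumes "finite B" "0 \<le> a" "\<forall>y\<in>B. 0 \<le> f y"
  shows "a + sum f B = 0 \<longleftrightarrow> a = 0 \<and> (\<forall>y\<in>B. f y = 0)"
  using assms by (simp add: add_nonneg_eq_0_iff sum_nonneg sum_nonneg_eq_0_iff)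

lemma transport_plan_vanishes:
  assumes "finite A" "finite B" and plan: "transport_plan A B \<mu> \<nu> T X Y"
  shows "x \<in> A \<Longrightarrow> \<mu> x = 0 \<Longrightarrow> X x = 0 \<and> (\<forall>y\<in>B. T x y = 0)"
    and "y \<in> B \<Longrightarrow> \<nu> y = 0 \<Longrightarrow> Y y = 0 \<and> (\<forall>x\<in>A. T x y = 0)"
  using plan add_sum_nonneg_eq_0_iff[OF assms(2), of "X x" "T x"]
    add_sum_nonneg_eq_0_iff[OF assms(1), of "Y y" "\<lambda>x. T x y"]
  unfolding transport_plan_def by auto

lemma transport_plan_restrict:
  assumes fin: "finite A'" "finite B'" and sub: "A \<subseteq> A'" "B \<subseteq> B'"
    and supp: "supp \<mu> \<subseteq> A" "supp \<nu> \<subseteq> B" and plan: "transport_plan A' B' \<mu> \<nu> T X Y"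
  shows "transport_plan A B \<mu> \<nu> T X Y \<and> transport_cost A B T X Y = transport_cost A' B' T X Y"
proof -
  have zero_row: "X x = 0 \<and> (\<forall>y\<in>B'. T x y = 0)" if "x \<in> A' - A" for x
    using transport_plan_vanishes(1)[OF fin plan, of x] that supp by (auto simp: supp_def)
  have zero_col: "Y y = 0 \<and> (\<forall>x\<in>A'. T x y = 0)" if "y \<in> B' - B" for y
    using transport_plan_vanishes(2)[OF fin plan, of y] that supp by (auto simp: supp_def)
  have "transport_plan A B \<mu> \<nu> T X Y"
  proof (rule transport_planI)
    fix x assume "x \<in> A"
    then have "(\<Sum>y\<in>B'. T x y) = (\<Sum>y\<in>B. T x y)"
      by (intro sum.mono_neutral_right) (use fin sub zero_col in auto)
    with \<open>x \<in> A\<close> sub show "X x + (\<Sum>y\<in>B. T x y) = \<mu> x"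
      using transport_planD(4)[OF plan, of x] by auto
  next
    fix y assume "y \<in> B"
    then have "(\<Sum>x\<in>A'. T x y) = (\<Sum>x\<in>A. T x y)"
      by (intro sum.mono_neutral_right) (use fin sub zero_row in auto)
    with \<open>y \<in> B\<close> sub show "Y y + (\<Sum>x\<in>A. T x y) = \<nu> y"
      using transport_planD(5)[OF plan, of y] by auto
  qed (use sub transport_planD(1-3)[OF plan] in blast)+
  moreover have "transport_cost A' B' T X Y = transport_cost A B T X Y"
  proof -
    have "(\<Sum>(x,y)\<in>A' \<times> B'. ennreal (T x y) * edist1 x y) = (\<Sum>(x,y)\<in>A \<times> B. ennreal (T x y) * edist1 x y)"
      by (rule sum_product_mono_neutral_cong) (use fin sub zero_row zero_col in auto)
    moreover have "(\<Sum>x\<in>A'. ennreal (X x) * edelta x) = (\<Sum>x\<in>A. ennreal (X x) * edelta x)"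
      by (rule sum.mono_neutral_right) (use fin sub zero_row in auto)
    moreover have "(\<Sum>y\<in>B'. ennreal (Y y) * edelta y) = (\<Sum>y\<in>B. ennreal (Y y) * edelta y)"
      by (rule sum.mono_neutral_right) (use fin sub zero_col in auto)
    ultimately show ?thesis unfolding transport_cost_def by simp
  qed
  ultimately show ?thesis by simp
qed

lemma W1_on_superset:
  assumes "finite A'" "finite B'" "A \<subseteq> A'" "B \<subseteq> B'" "supp \<mu> \<subseteq> A" "supp \<nu> \<subseteq> B"
  shows "W1_on A' B' \<mu> \<nu> = W1_on A B \<mu> \<nu>"
proof (rule antisym)
  show "W1_on A' B' \<mu> \<nu> \<le> W1_on A B \<mu> \<nu>"
  proof (rule W1_on_greatest)
    fix T X Y assume "transport_plan A B \<mu> \<nu> T X Y"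
    from transport_plan_extend[OF assms this] show "W1_on A' B' \<mu> \<nu> \<le> transport_cost A B T X Y"
      by (auto dest: W1_on_le_cost)
  qed
  show "W1_on A B \<mu> \<nu> \<le> W1_on A' B' \<mu> \<nu>"
  proof (rule W1_on_greatest)
    fix T X Y assume "transport_plan A' B' \<mu> \<nu> T X Y"
    from transport_plan_restrict[OF assms this] show "W1_on A B \<mu> \<nu> \<le> transport_cost A' B' T X Y"
      by (auto dest: W1_on_le_cost)
  qed
qed

lemma W1_on_self:
  assumes "finite A" "\<forall>x\<in>A. 0 \<le> \<mu> x"
  shows "W1_on A A \<mu> \<mu> = 0"
proof -
  define T where "T = (\<lambda>x y. if x = y then \<mu> x else 0)"
  have "transport_plan A A \<mu> \<mu> T (\<lambda>_. 0) (\<lambda>_. 0)"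
    unfolding transport_plan_def T_def using assms by (auto simp: sum.delta sum.delta')
  moreover have "transport_cost A A T (\<lambda>_. 0) (\<lambda>_. 0) = 0"
    unfolding transport_cost_def T_def by (auto intro!: sum.neutral)
  ultimately show ?thesis
    using W1_on_le_cost by (metis le_zero_eq)
qed

lemma sum_product_swap: "(\<Sum>(x,y)\<in>A \<times> B. f x y) = (\<Sum>(y,x)\<in>B \<times> A. f x y)"
  by (subst product_swap[symmetric], subst sum.reindex) (auto simp: case_prod_beta)

lemma W1_on_swap_le: "W1_on B A \<nu> \<mu> \<le> W1_on A B \<mu> \<nu>"
proof (rule W1_on_greatest)
  fix T X Y assume "transport_plan A B \<mu> \<nu> T X Y"
  then have "transport_plan B A \<nu> \<mu> (\<lambda>y x. T x y) Y X"
    unfolding transport_plan_def by auto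
  moreover have "transport_cost B A (\<lambda>y x. T x y) Y X = transport_cost A B T X Y"
    unfolding transport_cost_def sum_product_swap[of _ B A] by (simp add: edist1_commute ac_simps)
  ultimately show "W1_on B A \<nu> \<mu> \<le> transport_cost A B T X Y"
    using W1_on_le_cost by metis
qed

lemma W1_on_swap: "W1_on A B \<mu> \<nu> = W1_on B A \<nu> \<mu>"
  by (simp add: W1_on_swap_le antisym)

lemma W1_nonneg: "0 \<le> W1 \<mu> \<nu>"
  by (simp add: W1_eq_W1_on)

lemma W1_commute: "W1 \<mu> \<nu> = W1 \<nu> \<mu>"
  by (simp add: W1_eq_W1_on W1_on_swap[of "supp \<mu>"])

lemma ennreal_le_Inf_add:
  fixes c :: ennreal
  assumes "\<And>a b. a \<in> A \<Longrightarrow> b \<in> B \<Longrightarrow> c \<le> a + b"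
  shows "c \<le> Inf A + Inf B"
proof -
  have Inf_add_const: "Inf S + d = (INF s\<in>S. s + d)" if "S \<noteq> {}" for S and d :: ennreal
    using that
    by (subst continuous_at_Inf_mono[where f = "\<lambda>x. x + d"])
      (auto simp: mono_def add_mono continuous_at_imp_continuous_at_within image_comp
        intro!: continuous_intros)
  show ?thesis
  proof (cases "A = {} \<or> B = {}")
    case False
    have "c \<le> a + Inf B" if "a \<in> A" for a
    proof -
      have "c \<le> (INF b\<in>B. b + a)"
        by (rule INF_greatest) (metis assms that add.commute)
      then show ?thesis
        using Inf_add_const[of B a] False by (simp add: add.commute)
    qed
    then have "c \<le> (INF a\<in>A. a + Inf B)"
      by (rule INF_greatest)
    then show ?thesis
      using Inf_add_const[of A "Inf B"] False by simp
  qed auto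
qed

lemma transport_plan_add:
  assumes "transport_plan A B \<mu>\<^sub>1 \<nu>\<^sub>1 T\<^sub>1 X\<^sub>1 Y\<^sub>1" "transport_plan A B \<mu>\<^sub>2 \<nu>\<^sub>2 T\<^sub>2 X\<^sub>2 Y\<^sub>2"
  shows "transport_plan A B (\<lambda>x. \<mu>\<^sub>1 x + \<mu>\<^sub>2 x) (\<lambda>y. \<nu>\<^sub>1 y + \<nu>\<^sub>2 y)
    (\<lambda>x y. T\<^sub>1 x y + T\<^sub>2 x y) (\<lambda>x. X\<^sub>1 x + X\<^sub>2 x) (\<lambda>y. Y\<^sub>1 y + Y\<^sub>2 y)"
  using assms unfolding transport_plan_def by (force simp: sum.distrib)

lemma transport_cost_add:
  assumes "transport_plan A B \<mu>\<^sub>1 \<nu>\<^sub>1 T\<^sub>1 X\<^sub>1 Y\<^sub>1" "transport_plan A B \<mu>\<^sub>2 \<nu>\<^sub>2 T\<^sub>2 X\<^sub>2 Y\<^sub>2"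
  shows "transport_cost A B (\<lambda>x y. T\<^sub>1 x y + T\<^sub>2 x y) (\<lambda>x. X\<^sub>1 x + X\<^sub>2 x) (\<lambda>y. Y\<^sub>1 y + Y\<^sub>2 y)
    = transport_cost A B T\<^sub>1 X\<^sub>1 Y\<^sub>1 + transport_cost A B T\<^sub>2 X\<^sub>2 Y\<^sub>2"
proof -
  have "(\<Sum>(x,y)\<in>A \<times> B. ennreal (T\<^sub>1 x y + T\<^sub>2 x y) * edist1 x y)
      = (\<Sum>(x,y)\<in>A \<times> B. ennreal (T\<^sub>1 x y) * edist1 x y) + (\<Sum>(x,y)\<in>A \<times> B. ennreal (T\<^sub>2 x y) * edist1 x y)"
    unfolding sum.distrib[symmetric]
    by (rule sum.cong) (use assms in \<open>auto simp: transport_plan_def distrib_right\<close>)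
  moreover have "(\<Sum>x\<in>A. ennreal (X\<^sub>1 x + X\<^sub>2 x) * edelta x)
      = (\<Sum>x\<in>A. ennreal (X\<^sub>1 x) * edelta x) + (\<Sum>x\<in>A. ennreal (X\<^sub>2 x) * edelta x)"
    unfolding sum.distrib[symmetric]
    by (rule sum.cong) (use assms in \<open>auto simp: transport_plan_def distrib_right\<close>)
  moreover have "(\<Sum>y\<in>B. ennreal (Y\<^sub>1 y + Y\<^sub>2 y) * edelta y)
      = (\<Sum>y\<in>B. ennreal (Y\<^sub>1 y) * edelta y) + (\<Sum>y\<in>B. ennreal (Y\<^sub>2 y) * edelta y)"
    unfolding sum.distrib[symmetric]
    by (rule sum.cong) (use assms in \<open>auto simp: transport_plan_def distrib_right\<close>)
  ultimately show ?thesis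
    unfolding transport_cost_def by (simp add: ac_simps)
qed

lemma W1_on_add_le:
  "W1_on A B (\<lambda>x. \<mu>\<^sub>1 x + \<mu>\<^sub>2 x) (\<lambda>y. \<nu>\<^sub>1 y + \<nu>\<^sub>2 y) \<le> W1_on A B \<mu>\<^sub>1 \<nu>\<^sub>1 + W1_on A B \<mu>\<^sub>2 \<nu>\<^sub>2"
  unfolding W1_on_def[of A B \<mu>\<^sub>1] W1_on_def[of A B \<mu>\<^sub>2]
proof (rule ennreal_le_Inf_add, clarify)
  fix T\<^sub>1 X\<^sub>1 Y\<^sub>1 T\<^sub>2 X\<^sub>2 Y\<^sub>2
  assume "transport_plan A B \<mu>\<^sub>1 \<nu>\<^sub>1 T\<^sub>1 X\<^sub>1 Y\<^sub>1" "transport_plan A B \<mu>\<^sub>2 \<nu>\<^sub>2 T\<^sub>2 X\<^sub>2 Y\<^sub>2"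
  from W1_on_le_cost[OF transport_plan_add[OF this]] transport_cost_add[OF this]
  show "W1_on A B (\<lambda>x. \<mu>\<^sub>1 x + \<mu>\<^sub>2 x) (\<lambda>y. \<nu>\<^sub>1 y + \<nu>\<^sub>2 y)
      \<le> transport_cost A B T\<^sub>1 X\<^sub>1 Y\<^sub>1 + transport_cost A B T\<^sub>2 X\<^sub>2 Y\<^sub>2"
    by simp
qed

definition outflow_cost :: "pt set \<Rightarrow> pt \<Rightarrow> (pt \<Rightarrow> pt \<Rightarrow> real) \<Rightarrow> (pt \<Rightarrow> real) \<Rightarrow> ennreal" where
  "outflow_cost B p T X = (\<Sum>y\<in>B. ennreal (T p y) * edist1 p y) + ennreal (X p) * edelta p"

definition inflow_cost :: "pt set \<Rightarrow> pt \<Rightarrow> (pt \<Rightarrow> pt \<Rightarrow> real) \<Rightarrow> (pt \<Rightarrow> real) \<Rightarrow> ennreal" where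
  "inflow_cost A p T Y = (\<Sum>x\<in>A. ennreal (T x p) * edist1 x p) + ennreal (Y p) * edelta p"

lemma sum_product_remove:
  assumes "finite S" "p \<in> S"
  shows "(\<Sum>(x,y)\<in>S \<times> S. f x y) = f p p + (\<Sum>y\<in>S - {p}. f p y) + (\<Sum>x\<in>S - {p}. f x p)
    + (\<Sum>(x,y)\<in>(S - {p}) \<times> (S - {p}). f x y)"
proof -
  have "(\<Sum>(x,y)\<in>S \<times> S. f x y) = (\<Sum>x\<in>S. f x p + (\<Sum>y\<in>S - {p}. f x y))"
    by (simp add: sum.cartesian_product[symmetric] sum.remove[OF assms])
  also have "\<dots> = (\<Sum>x\<in>S. f x p) + (\<Sum>x\<in>S. \<Sum>y\<in>S - {p}. f x y)"
    by (rule sum.distrib)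
  also have "\<dots> = f p p + (\<Sum>x\<in>S - {p}. f x p) + ((\<Sum>y\<in>S - {p}. f p y)
      + (\<Sum>(x,y)\<in>(S - {p}) \<times> (S - {p}). f x y))"
    by (subst (1 2) sum.remove[OF assms]) (simp add: sum.cartesian_product)
  finally show ?thesis by (simp add: ac_simps)
qed

lemma transport_cost_split:
  assumes "finite S" "p \<in> S"
  shows "transport_cost S S T X Y = outflow_cost (S - {p}) p T X + inflow_cost (S - {p}) p T Y
    + transport_cost (S - {p}) (S - {p}) T X Y"
  unfolding transport_cost_def outflow_cost_def inflow_cost_def
    sum_product_remove[OF assms] sum.remove[OF assms]
  by (simp add: ac_simps)

lemma outflow_cost_le_transport_cost:
  assumes "finite S" "p \<in> S"
  shows "outflow_cost (S - {p}) p T X \<le> transport_cost S S T X Y"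
  unfolding transport_cost_split[OF assms] by (simp add: add.assoc add_increasing2)

lemma ennreal_add_sum:
  "0 \<le> a \<Longrightarrow> (\<And>i. i \<in> I \<Longrightarrow> 0 \<le> f i) \<Longrightarrow> ennreal (a + sum f I) = ennreal a + (\<Sum>i\<in>I. ennreal (f i))"
  by (simp add: sum_nonneg)

lemma W1_on_pos:
  assumes "finite S" "p \<in> S" "snd p \<noteq> ereal (fst p)" "\<nu> p < \<mu> p"
  shows "0 < W1_on S S \<mu> \<nu>"
proof -
  define m where "m = Min (insert (edelta p) (edist1 p ` (S - {p})))"
  have m_pos: "0 < m"
    unfolding m_def using assms by (auto simp: edelta_pos)
  have "m * ennreal (\<mu> p - \<nu> p) \<le> W1_on S S \<mu> \<nu>"
  proof (rule W1_on_greatest)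
    fix T X Y assume plan: "transport_plan S S \<mu> \<nu> T X Y"
    note plan_facts = transport_planD[OF plan]
    have "T p p \<le> (\<Sum>x\<in>S. T x p)"
      using plan_facts(1) assms by (intro member_le_sum) auto
    then have excess: "\<mu> p - \<nu> p \<le> X p + (\<Sum>y\<in>S - {p}. T p y)"
      using plan_facts(3-5)[of p] assms by (simp add: sum.remove)
    moreover have Xp: "0 \<le> X p" and Tp: "\<And>y. y \<in> S - {p} \<Longrightarrow> 0 \<le> T p y"
      using plan_facts(1,2) assms by auto
    ultimately have "m * ennreal (\<mu> p - \<nu> p) \<le> m * ennreal (X p + (\<Sum>y\<in>S - {p}. T p y))"
      by (intro mult_left_mono ennreal_leI) auto
    also have "\<dots> = m * (ennreal (X p) + (\<Sum>y\<in>S - {p}. ennreal (T p y)))"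
      using ennreal_add_sum[of "X p" "S - {p}" "T p"] Xp Tp by simp
    also have "\<dots> = (\<Sum>y\<in>S - {p}. ennreal (T p y) * m) + ennreal (X p) * m"
      by (simp add: distrib_left sum_distrib_left mult.commute add.commute)
    also have "\<dots> \<le> outflow_cost (S - {p}) p T X"
      unfolding outflow_cost_def m_def using assms
      by (intro add_mono sum_mono mult_left_mono Min_le) auto
    also have "\<dots> \<le> transport_cost S S T X Y"
      using assms(1,2) by (rule outflow_cost_le_transport_cost)
    finally show "m * ennreal (\<mu> p - \<nu> p) \<le> transport_cost S S T X Y" .
  qed
  moreover have "0 < m * ennreal (\<mu> p - \<nu> p)"
    using m_pos assms by (simp add: ennreal_zero_less_mult_iff)
  ultimately show ?thesis by order
qed

section \<open>Cancellation of a common mass\<close>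

lemma transport_cost_cong_off_diagonal:
  assumes "\<And>x y. x \<in> A \<Longrightarrow> y \<in> B \<Longrightarrow> x \<noteq> y \<Longrightarrow> T' x y = T x y"
  shows "transport_cost A B T' X Y = transport_cost A B T X Y"
proof -
  have "ennreal (T' x y) * edist1 x y = ennreal (T x y) * edist1 x y" if "x \<in> A" "y \<in> B" for x y
    using assms[OF that] by (cases "x = y") auto
  then have "(\<Sum>(x,y)\<in>A \<times> B. ennreal (T' x y) * edist1 x y) = (\<Sum>(x,y)\<in>A \<times> B. ennreal (T x y) * edist1 x y)"
    by (intro sum.cong) auto
  then show ?thesis unfolding transport_cost_def by simp
qed

lemma transport_plan_remove_self_mass:
  assumes plan: "transport_plan S S \<mu> \<nu> T X Y" and "finite S" "p \<in> S" "c \<le> T p p"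
  shows "transport_plan S S (\<mu>(p := \<mu> p - c)) (\<nu>(p := \<nu> p - c))
    (\<lambda>x y. T x y - (if x = p \<and> y = p then c else 0)) X Y"
proof (rule transport_planI)
  fix x assume "x \<in> S"
  then show "X x + (\<Sum>y\<in>S. T x y - (if x = p \<and> y = p then c else 0)) = (\<mu>(p := \<mu> p - c)) x"
    using assms transport_planD(4)[OF plan] by (cases "x = p") (auto simp: sum_subtractf)
next
  fix y assume "y \<in> S"
  then show "Y y + (\<Sum>x\<in>S. T x y - (if x = p \<and> y = p then c else 0)) = (\<nu>(p := \<nu> p - c)) y"
    using assms transport_planD(5)[OF plan] by (cases "y = p") (auto simp: sum_subtractf)
qed (use assms transport_planD[OF plan] in auto)

(* b x and a y are the flows into and out of a hub, b0 and a0 those from and to the diagonal: the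
   direct connections on the left are paid for by the two legs through the hub. *)

lemma shortcut_sum_le:
  fixes a b din dout l :: "'a \<Rightarrow> ennreal" and d :: "'a \<Rightarrow> 'a \<Rightarrow> ennreal"
  assumes d: "\<And>x y. d x y \<le> din x + dout y"
    and l_in: "\<And>x. l x \<le> din x + lp" and l_out: "\<And>y. l y \<le> lp + dout y"
  shows "(\<Sum>x\<in>I. \<Sum>y\<in>I. b x * a y * d x y) + (\<Sum>x\<in>I. b x * a0 * l x) + (\<Sum>y\<in>I. b0 * a y * l y)
    \<le> (b0 + sum b I) * ((\<Sum>y\<in>I. a y * dout y) + a0 * lp)
      + (a0 + sum a I) * ((\<Sum>x\<in>I. b x * din x) + b0 * lp)"
proof -
  define Din where "Din = (\<Sum>x\<in>I. b x * din x)"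
  define Dout where "Dout = (\<Sum>y\<in>I. a y * dout y)"
  have "(\<Sum>x\<in>I. \<Sum>y\<in>I. b x * a y * d x y) \<le> (\<Sum>x\<in>I. \<Sum>y\<in>I. b x * a y * (din x + dout y))"
    using d by (intro sum_mono mult_left_mono) auto
  also have "\<dots> = (\<Sum>x\<in>I. b x * din x * sum a I + b x * Dout)"
    by (simp add: Dout_def distrib_left sum.distrib sum_distrib_left mult_ac)
  also have "\<dots> = sum a I * Din + sum b I * Dout"
    by (simp add: Din_def sum.distrib sum_distrib_left sum_distrib_right mult_ac)
  finally have pairs: "(\<Sum>x\<in>I. \<Sum>y\<in>I. b x * a y * d x y) \<le> sum a I * Din + sum b I * Dout" .
  have "(\<Sum>x\<in>I. b x * a0 * l x) \<le> (\<Sum>x\<in>I. b x * a0 * (din x + lp))"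
    using l_in by (intro sum_mono mult_left_mono) auto
  also have "\<dots> = a0 * Din + a0 * lp * sum b I"
    by (simp add: Din_def distrib_left sum.distrib sum_distrib_left sum_distrib_right mult_ac)
  finally have into_diagonal: "(\<Sum>x\<in>I. b x * a0 * l x) \<le> a0 * Din + a0 * lp * sum b I" .
  have "(\<Sum>y\<in>I. b0 * a y * l y) \<le> (\<Sum>y\<in>I. b0 * a y * (lp + dout y))"
    using l_out by (intro sum_mono mult_left_mono) auto
  also have "\<dots> = b0 * lp * sum a I + b0 * Dout"
    by (simp add: Dout_def distrib_left sum.distrib sum_distrib_left sum_distrib_right mult_ac)
  finally have from_diagonal: "(\<Sum>y\<in>I. b0 * a y * l y) \<le> b0 * lp * sum a I + b0 * Dout" .
  have "(\<Sum>x\<in>I. \<Sum>y\<in>I. b x * a y * d x y) + (\<Sum>x\<in>I. b x * a0 * l x) + (\<Sum>y\<in>I. b0 * a y * l y)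
      \<le> (sum a I * Din + sum b I * Dout) + (a0 * Din + a0 * lp * sum b I) + (b0 * lp * sum a I + b0 * Dout)"
    using pairs into_diagonal from_diagonal by (intro add_mono)
  also have "\<dots> \<le> (sum a I * Din + sum b I * Dout) + (a0 * Din + a0 * lp * sum b I) + (b0 * lp * sum a I + b0 * Dout)
      + (a0 * b0 * lp + a0 * b0 * lp)"
    by (rule add_increasing2) simp_all
  also have "\<dots> = (b0 + sum b I) * (Dout + a0 * lp) + (a0 + sum a I) * (Din + b0 * lp)"
    by (simp add: algebra_simps)
  finally show ?thesis unfolding Din_def Dout_def .
qed

(* The rerouting removes the fraction out_share of every flow leaving p and the fraction in_share
   of every flow entering p (mass c each, since nothing stays at p), and joins the removed inflow
   from x to the removed outflow to y with weight rate * T x p * T p y. X p and Y p are the flows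
   from p to the diagonal and from the diagonal to p. *)

locale point_rerouting =
  fixes S :: "pt set" and p :: pt and \<mu> \<nu> :: "pt \<Rightarrow> real" and c :: real
    and T :: "pt \<Rightarrow> pt \<Rightarrow> real" and X Y :: "pt \<Rightarrow> real"
  assumes finite_S: "finite S" and p_in_S: "p \<in> S" and c_pos: "0 < c"
    and mu_nonneg: "0 \<le> \<mu> p" and nu_nonneg: "0 \<le> \<nu> p" and no_self_mass: "T p p = 0"
    and plan: "transport_plan S S (\<mu>(p := \<mu> p + c)) (\<nu>(p := \<nu> p + c)) T X Y"
begin

definition in_share :: real where "in_share = c / (\<nu> p + c)"
definition out_share :: real where "out_share = c / (\<mu> p + c)"
definition rate :: real where "rate = c / ((\<mu> p + c) * (\<nu> p + c))"

definition rerouted_T :: "pt \<Rightarrow> pt \<Rightarrow> real" where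
  "rerouted_T x y = T x y + rate * T x p * T p y
     - (if y = p then in_share * T x p else 0) - (if x = p then out_share * T p y else 0)"

definition rerouted_X :: "pt \<Rightarrow> real" where
  "rerouted_X x = X x + rate * T x p * X p - (if x = p then out_share * X p else 0)"

definition rerouted_Y :: "pt \<Rightarrow> real" where
  "rerouted_Y y = Y y + rate * Y p * T p y - (if y = p then in_share * Y p else 0)"

lemma shares:
  "0 \<le> in_share" "in_share \<le> 1" "0 \<le> out_share" "out_share \<le> 1" "0 \<le> rate"
  "rate * (\<mu> p + c) = in_share" "rate * (\<nu> p + c) = out_share"
  "out_share * (\<mu> p + c) = c" "in_share * (\<nu> p + c) = c"
  using c_pos mu_nonneg nu_nonneg by (simp_all add: in_share_def out_share_def rate_def)

lemma rerouted_simps: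
  "rerouted_T p y = (1 - out_share) * T p y"
  "x \<noteq> p \<Longrightarrow> rerouted_T x p = (1 - in_share) * T x p"
  "x \<noteq> p \<Longrightarrow> y \<noteq> p \<Longrightarrow> rerouted_T x y = T x y + rate * T x p * T p y"
  "rerouted_X p = (1 - out_share) * X p"
  "x \<noteq> p \<Longrightarrow> rerouted_X x = X x + rate * T x p * X p"
  "rerouted_Y p = (1 - in_share) * Y p"
  "y \<noteq> p \<Longrightarrow> rerouted_Y y = Y y + rate * Y p * T p y"
  by (simp_all add: rerouted_T_def rerouted_X_def rerouted_Y_def no_self_mass algebra_simps)

lemma mass_at_p:
  "X p + (\<Sum>y\<in>S. T p y) = \<mu> p + c" "Y p + (\<Sum>x\<in>S. T x p) = \<nu> p + c"
  using transport_planD(4,5)[OF plan p_in_S] by simp_all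

lemma rerouted_row_sum:
  "(\<Sum>y\<in>S. rerouted_T x y) = (\<Sum>y\<in>S. T x y) + rate * T x p * (\<Sum>y\<in>S. T p y)
    - in_share * T x p - (if x = p then out_share * (\<Sum>y\<in>S. T p y) else 0)"
  using finite_S p_in_S
  by (cases "x = p") (simp_all add: rerouted_T_def sum.distrib sum_subtractf sum_distrib_left)

lemma rerouted_col_sum:
  "(\<Sum>x\<in>S. rerouted_T x y) = (\<Sum>x\<in>S. T x y) + rate * T p y * (\<Sum>x\<in>S. T x p)
    - out_share * T p y - (if y = p then in_share * (\<Sum>x\<in>S. T x p) else 0)"
  using finite_S p_in_S
  by (cases "y = p") (simp_all add: rerouted_T_def sum.distrib sum_subtractf sum_distrib_left
      sum_distrib_right mult_ac)

lemma rerouted_plan: "transport_plan S S \<mu> \<nu> rerouted_T rerouted_X rerouted_Y"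
proof (rule transport_planI)
  fix x assume x: "x \<in> S"
  have "rerouted_X x + (\<Sum>y\<in>S. rerouted_T x y) = (X x + (\<Sum>y\<in>S. T x y))
      + rate * (X p + (\<Sum>y\<in>S. T p y)) * T x p - in_share * T x p
      - (if x = p then out_share * (X p + (\<Sum>y\<in>S. T p y)) else 0)"
    unfolding rerouted_row_sum rerouted_X_def by (simp add: algebra_simps)
  then show "rerouted_X x + (\<Sum>y\<in>S. rerouted_T x y) = \<mu> x"
    using transport_planD(4)[OF plan x] by (simp add: mass_at_p shares)
next
  fix y assume y: "y \<in> S"
  have "rerouted_Y y + (\<Sum>x\<in>S. rerouted_T x y) = (Y y + (\<Sum>x\<in>S. T x y))
      + rate * (Y p + (\<Sum>x\<in>S. T x p)) * T p y - out_share * T p y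
      - (if y = p then in_share * (Y p + (\<Sum>x\<in>S. T x p)) else 0)"
    unfolding rerouted_col_sum rerouted_Y_def by (simp add: algebra_simps)
  then show "rerouted_Y y + (\<Sum>x\<in>S. rerouted_T x y) = \<nu> y"
    using transport_planD(5)[OF plan y] by (simp add: mass_at_p shares)
next
  fix x y assume "x \<in> S" "y \<in> S"
  then show "0 \<le> rerouted_T x y"
    using transport_planD(1)[OF plan] p_in_S shares
    by (cases "x = p"; cases "y = p") (simp_all add: rerouted_simps)
next
  fix x assume "x \<in> S"
  then show "0 \<le> rerouted_X x"
    using transport_planD(1,2)[OF plan] p_in_S shares
    by (cases "x = p") (simp_all add: rerouted_simps)
next
  fix y assume "y \<in> S"
  then show "0 \<le> rerouted_Y y"
    using transport_planD(1,3)[OF plan] p_in_S shares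
    by (cases "y = p") (simp_all add: rerouted_simps)
qed

lemma rerouted_outflow_cost:
  "outflow_cost (S - {p}) p rerouted_T rerouted_X = ennreal (1 - out_share) * outflow_cost (S - {p}) p T X"
  using shares
  by (simp add: outflow_cost_def rerouted_simps ennreal_mult'' sum_distrib_left distrib_left mult_ac)

lemma rerouted_inflow_cost:
  "inflow_cost (S - {p}) p rerouted_T rerouted_Y = ennreal (1 - in_share) * inflow_cost (S - {p}) p T Y"
proof -
  have "(\<Sum>x\<in>S - {p}. ennreal (rerouted_T x p) * edist1 x p)
      = ennreal (1 - in_share) * (\<Sum>x\<in>S - {p}. ennreal (T x p) * edist1 x p)"
    unfolding sum_distrib_left
    by (rule sum.cong) (use shares in \<open>auto simp: rerouted_simps ennreal_mult'' mult_ac\<close>)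
  then show ?thesis
    using shares by (simp add: inflow_cost_def rerouted_simps ennreal_mult'' distrib_left mult_ac)
qed

definition shortcut_cost :: ennreal where
  "shortcut_cost = (\<Sum>x\<in>S - {p}. \<Sum>y\<in>S - {p}. ennreal (T x p) * ennreal (T p y) * edist1 x y)
     + (\<Sum>x\<in>S - {p}. ennreal (T x p) * ennreal (X p) * edelta x)
     + (\<Sum>y\<in>S - {p}. ennreal (Y p) * ennreal (T p y) * edelta y)"

lemma rerouted_rest_cost:
  "transport_cost (S - {p}) (S - {p}) rerouted_T rerouted_X rerouted_Y
    = transport_cost (S - {p}) (S - {p}) T X Y + ennreal rate * shortcut_cost"
proof -
  have T_nonneg: "\<And>x y. x \<in> S \<Longrightarrow> y \<in> S \<Longrightarrow> 0 \<le> T x y"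
    and X_nonneg: "\<And>x. x \<in> S \<Longrightarrow> 0 \<le> X x" and Y_nonneg: "\<And>y. y \<in> S \<Longrightarrow> 0 \<le> Y y"
    using transport_planD(1-3)[OF plan] by blast+
  then have
    "\<And>x y. x \<in> S - {p} \<Longrightarrow> y \<in> S - {p} \<Longrightarrow>
      ennreal (rerouted_T x y) = ennreal (T x y) + ennreal rate * (ennreal (T x p) * ennreal (T p y))"
    "\<And>x. x \<in> S - {p} \<Longrightarrow>
      ennreal (rerouted_X x) = ennreal (X x) + ennreal rate * (ennreal (T x p) * ennreal (X p))"
    "\<And>y. y \<in> S - {p} \<Longrightarrow>
      ennreal (rerouted_Y y) = ennreal (Y y) + ennreal rate * (ennreal (Y p) * ennreal (T p y))"
    using p_in_S shares by (simp_all add: rerouted_simps ennreal_mult mult.assoc)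
  note rerouted_eqs = this
  have "(\<Sum>(x,y)\<in>(S - {p}) \<times> (S - {p}). ennreal (rerouted_T x y) * edist1 x y)
      = (\<Sum>(x,y)\<in>(S - {p}) \<times> (S - {p}). ennreal (T x y) * edist1 x y)
        + ennreal rate * (\<Sum>x\<in>S - {p}. \<Sum>y\<in>S - {p}. ennreal (T x p) * ennreal (T p y) * edist1 x y)"
    by (simp add: rerouted_eqs sum.cartesian_product[symmetric] distrib_left sum.distrib
        sum_distrib_left mult_ac)
  moreover have "(\<Sum>x\<in>S - {p}. ennreal (rerouted_X x) * edelta x) = (\<Sum>x\<in>S - {p}. ennreal (X x) * edelta x)
      + ennreal rate * (\<Sum>x\<in>S - {p}. ennreal (T x p) * ennreal (X p) * edelta x)"
    by (simp add: rerouted_eqs distrib_left sum.distrib sum_distrib_left mult_ac)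
  moreover have "(\<Sum>y\<in>S - {p}. ennreal (rerouted_Y y) * edelta y) = (\<Sum>y\<in>S - {p}. ennreal (Y y) * edelta y)
      + ennreal rate * (\<Sum>y\<in>S - {p}. ennreal (Y p) * ennreal (T p y) * edelta y)"
    by (simp add: rerouted_eqs distrib_left sum.distrib sum_distrib_left mult_ac)
  ultimately show ?thesis
    unfolding transport_cost_def shortcut_cost_def by (simp add: distrib_left ac_simps)
qed

lemma shortcut_cost_le:
  "shortcut_cost \<le> ennreal (\<nu> p + c) * outflow_cost (S - {p}) p T X
    + ennreal (\<mu> p + c) * inflow_cost (S - {p}) p T Y"
proof -
  have T_nonneg: "\<And>x y. x \<in> S \<Longrightarrow> y \<in> S \<Longrightarrow> 0 \<le> T x y"
    using transport_planD(1)[OF plan] by blast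
  have "ennreal (\<mu> p + c) = ennreal (X p) + (\<Sum>y\<in>S - {p}. ennreal (T p y))"
    using mass_at_p(1) ennreal_add_sum[of "X p" "S - {p}" "T p"] transport_planD(2)[OF plan p_in_S]
      T_nonneg finite_S p_in_S
    by (simp add: sum.remove no_self_mass)
  moreover have "ennreal (\<nu> p + c) = ennreal (Y p) + (\<Sum>x\<in>S - {p}. ennreal (T x p))"
    using mass_at_p(2) ennreal_add_sum[of "Y p" "S - {p}" "\<lambda>x. T x p"] transport_planD(3)[OF plan p_in_S]
      T_nonneg finite_S p_in_S
    by (simp add: sum.remove no_self_mass)
  ultimately show ?thesis
    unfolding shortcut_cost_def outflow_cost_def inflow_cost_def
    by (simp only:) (rule shortcut_sum_le[OF edist1_triangle edelta_le_edist1_add edelta_le_add_edist1])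
qed

lemma rerouted_cost_le:
  "transport_cost S S rerouted_T rerouted_X rerouted_Y \<le> transport_cost S S T X Y"
proof -
  let ?O = "outflow_cost (S - {p}) p T X" and ?I = "inflow_cost (S - {p}) p T Y"
    and ?R = "transport_cost (S - {p}) (S - {p}) T X Y"
  have "transport_cost S S rerouted_T rerouted_X rerouted_Y
      = ennreal (1 - out_share) * ?O + ennreal (1 - in_share) * ?I + (?R + ennreal rate * shortcut_cost)"
    by (simp add: transport_cost_split[OF finite_S p_in_S] rerouted_outflow_cost
        rerouted_inflow_cost rerouted_rest_cost)
  also have "\<dots> \<le> ennreal (1 - out_share) * ?O + ennreal (1 - in_share) * ?I
      + (?R + ennreal rate * (ennreal (\<nu> p + c) * ?O + ennreal (\<mu> p + c) * ?I))"
    by (intro add_left_mono mult_left_mono shortcut_cost_le) simp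
  also have "\<dots> = (ennreal (1 - out_share) + ennreal out_share) * ?O
      + (ennreal (1 - in_share) + ennreal in_share) * ?I + ?R"
  proof -
    have "ennreal rate * ennreal (\<nu> p + c) = ennreal out_share"
      "ennreal rate * ennreal (\<mu> p + c) = ennreal in_share"
      using shares mu_nonneg nu_nonneg c_pos by (simp_all del: ennreal_plus flip: ennreal_mult)
    then show ?thesis
      by (simp add: distrib_left distrib_right mult.assoc[symmetric] ac_simps)
  qed
  also have "\<dots> = transport_cost S S T X Y"
    using shares by (simp add: transport_cost_split[OF finite_S p_in_S] flip: ennreal_plus)
  finally show ?thesis .
qed

end

lemma W1_on_le_add_point_mass:
  assumes "finite S" "p \<in> S" "0 \<le> c" "0 \<le> \<mu> p" "0 \<le> \<nu> p"
  shows "W1_on S S \<mu> \<nu> \<le> W1_on S S (\<mu>(p := \<mu> p + c)) (\<nu>(p := \<nu> p + c))"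
proof (rule W1_on_greatest)
  fix T X Y assume plan: "transport_plan S S (\<mu>(p := \<mu> p + c)) (\<nu>(p := \<nu> p + c)) T X Y"
  \<comment> \<open>The part of c that the plan keeps at p cancels directly; the rest passes through p.\<close>
  define c\<^sub>0 where "c\<^sub>0 = min c (T p p)"
  define T\<^sub>0 where "T\<^sub>0 = (\<lambda>x y. T x y - (if x = p \<and> y = p then c\<^sub>0 else 0))"
  have plan0: "transport_plan S S (\<mu>(p := \<mu> p + (c - c\<^sub>0))) (\<nu>(p := \<nu> p + (c - c\<^sub>0))) T\<^sub>0 X Y"
    using transport_plan_remove_self_mass[OF plan assms(1,2), of c\<^sub>0]
    by (simp add: T\<^sub>0_def c\<^sub>0_def algebra_simps)
  have cost: "transport_cost S S T\<^sub>0 X Y = transport_cost S S T X Y"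
    by (rule transport_cost_cong_off_diagonal) (auto simp: T\<^sub>0_def)
  show "W1_on S S \<mu> \<nu> \<le> transport_cost S S T X Y"
  proof (cases "c \<le> T p p")
    case True
    then show ?thesis
      using W1_on_le_cost[OF plan0] cost by (simp add: c\<^sub>0_def)
  next
    case False
    interpret point_rerouting S p \<mu> \<nu> "c - c\<^sub>0" T\<^sub>0 X Y
      using assms plan0 False by unfold_locales (auto simp: c\<^sub>0_def T\<^sub>0_def)
    show ?thesis
      using W1_on_le_cost[OF rerouted_plan] rerouted_cost_le cost by simp
  qed
qed

lemma W1_on_le_add_common:
  assumes "finite S" "\<forall>x\<in>S. 0 \<le> \<mu> x" "\<forall>x\<in>S. 0 \<le> \<nu> x" "\<And>x. 0 \<le> \<kappa> x" "supp \<kappa> \<subseteq> S"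
  shows "W1_on S S \<mu> \<nu> \<le> W1_on S S (\<lambda>x. \<mu> x + \<kappa> x) (\<lambda>x. \<nu> x + \<kappa> x)"
proof -
  have partial: "W1_on S S \<mu> \<nu> \<le> W1_on S S (\<lambda>x. \<mu> x + (if x \<in> F then \<kappa> x else 0))
      (\<lambda>x. \<nu> x + (if x \<in> F then \<kappa> x else 0))" if "F \<subseteq> S" for F
    using finite_subset[OF that assms(1)] that
  proof (induction F rule: finite_induct)
    case (insert q F)
    let ?\<mu> = "\<lambda>x. \<mu> x + (if x \<in> F then \<kappa> x else 0)"
    let ?\<nu> = "\<lambda>x. \<nu> x + (if x \<in> F then \<kappa> x else 0)"
    have "W1_on S S \<mu> \<nu> \<le> W1_on S S ?\<mu> ?\<nu>"
      using insert by simp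
    also have "\<dots> \<le> W1_on S S (?\<mu>(q := ?\<mu> q + \<kappa> q)) (?\<nu>(q := ?\<nu> q + \<kappa> q))"
      using insert assms by (intro W1_on_le_add_point_mass) auto
    also have "\<dots> = W1_on S S (\<lambda>x. \<mu> x + (if x \<in> insert q F then \<kappa> x else 0))
        (\<lambda>x. \<nu> x + (if x \<in> insert q F then \<kappa> x else 0))"
      using insert(2) by (intro arg_cong2[where f = "W1_on S S"]) (auto simp: fun_eq_iff)
    finally show ?case .
  qed simp
  have "(if x \<in> S then \<kappa> x else 0) = \<kappa> x" for x
    using assms(5) by (auto simp: supp_def)
  with partial[OF order_refl] show ?thesis
    by simp
qed

section \<open>The alternating distance\<close>

lemma supp_pospart_add_negpart: "supp (\<lambda>x. pospart f x + negpart g x) \<subseteq> supp f \<union> supp g"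
  by (auto simp: supp_def pospart_def negpart_def)

lemma supp_negpart_add_pospart: "supp (\<lambda>x. negpart f x + pospart g x) \<subseteq> supp f \<union> supp g"
  by (auto simp: supp_def pospart_def negpart_def)

lemma W1pm_eq_W1_on:
  assumes "finite S" "supp f \<subseteq> S" "supp g \<subseteq> S"
  shows "W1pm f g = enn2ereal (W1_on S S (\<lambda>x. pospart f x + negpart g x) (\<lambda>x. negpart f x + pospart g x))"
proof -
  have "W1_on S S (\<lambda>x. pospart f x + negpart g x) (\<lambda>x. negpart f x + pospart g x)
      = W1_on (supp (\<lambda>x. pospart f x + negpart g x)) (supp (\<lambda>x. negpart f x + pospart g x))
          (\<lambda>x. pospart f x + negpart g x) (\<lambda>x. negpart f x + pospart g x)"
    using assms supp_pospart_add_negpart[of f g] supp_negpart_add_pospart[of f g]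
    by (intro W1_on_superset) auto
  then show ?thesis
    unfolding W1pm_def W1_eq_W1_on by simp
qed

lemma W1pm_nonneg: "0 \<le> W1pm f g"
  unfolding W1pm_def by (rule W1_nonneg)

lemma W1pm_commute: "W1pm f g = W1pm g f"
  unfolding W1pm_def by (subst W1_commute) (simp add: add.commute)

lemma W1pm_self: "finite (supp f) \<Longrightarrow> W1pm f f = 0"
  using W1pm_eq_W1_on[of "supp f" f f] W1_on_self[of "supp f"]
  by (simp add: add.commute pospart_def negpart_def zero_ennreal.rep_eq)

lemma W1pm_pos:
  assumes "admissible f" "admissible g" "f \<noteq> g"
  shows "0 < W1pm f g"
proof -
  define S where "S = supp f \<union> supp g"
  obtain p where "f p \<noteq> g p"
    using assms(3) by blast
  then have "f p \<noteq> 0 \<or> g p \<noteq> 0"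
    by auto
  then have p: "p \<in> S" "snd p \<noteq> ereal (fst p)"
    using assms(1,2) by (auto simp: S_def supp_def admissible_def)
  have S: "finite S" "supp f \<subseteq> S" "supp g \<subseteq> S"
    using assms(1,2) by (auto simp: S_def admissible_def)
  have "0 < W1_on S S (\<lambda>x. pospart f x + negpart g x) (\<lambda>x. negpart f x + pospart g x)"
  proof (cases "g p < f p")
    case True
    then show ?thesis
      using W1_on_pos[OF S(1) p] by (simp add: pospart_def negpart_def)
  next
    case False
    then show ?thesis
      using W1_on_pos[OF S(1) p] \<open>f p \<noteq> g p\<close> W1_on_swap[of S S]
      by (simp add: pospart_def negpart_def)
  qed
  then show ?thesis
    unfolding W1pm_eq_W1_on[OF S] by (simp add: zero_ennreal.rep_eq less_ennreal.rep_eq)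
qed

lemma W1pm_triangle:
  assumes "finite (supp f)" "finite (supp g)" "finite (supp h)"
  shows "W1pm f h \<le> W1pm f g + W1pm g h"
proof -
  define S where "S = supp f \<union> supp g \<union> supp h"
  have S: "finite S" "supp f \<subseteq> S" "supp g \<subseteq> S" "supp h \<subseteq> S"
    using assms by (auto simp: S_def)
  let ?W = "\<lambda>f g. W1_on S S (\<lambda>x. pospart f x + negpart g x) (\<lambda>x. negpart f x + pospart g x)"
  have "?W f h \<le> W1_on S S (\<lambda>x. pospart f x + negpart h x + \<bar>g x\<bar>) (\<lambda>x. negpart f x + pospart h x + \<bar>g x\<bar>)"
    using S by (intro W1_on_le_add_common) (auto simp: pospart_def negpart_def supp_def)
  also have "\<dots> = W1_on S S (\<lambda>x. (pospart f x + negpart g x) + (pospart g x + negpart h x))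
      (\<lambda>x. (negpart f x + pospart g x) + (negpart g x + pospart h x))"
    by (intro arg_cong2[where f = "W1_on S S"]) (auto simp: fun_eq_iff pospart_def negpart_def)
  also have "\<dots> \<le> ?W f g + ?W g h"
    by (rule W1_on_add_le)
  finally show ?thesis
    unfolding W1pm_eq_W1_on[OF S(1,2,3)] W1pm_eq_W1_on[OF S(1,3,4)] W1pm_eq_W1_on[OF S(1,2,4)]
    by (simp add: less_eq_ennreal.rep_eq plus_ennreal.rep_eq)
qed

theorem mainTheorem12:
  fixes \<xi> \<eta> \<zeta> :: "pt \<Rightarrow> real"
  assumes "admissible \<xi>" and "admissible \<eta>" and "admissible \<zeta>"
  shows "W1pm \<xi> \<eta> \<ge> 0 \<and> (W1pm \<xi> \<eta> > 0 \<longleftrightarrow> \<xi> \<noteq> \<eta>)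
    \<and> W1pm \<xi> \<eta> = W1pm \<eta> \<xi>
    \<and> W1pm \<xi> \<eta> + W1pm \<eta> \<zeta> \<ge> W1pm \<xi> \<zeta>"
proof -
  have finite_supp: "finite (supp \<xi>)" "finite (supp \<eta>)" "finite (supp \<zeta>)"
    using assms by (simp_all add: admissible_def)
  have "W1pm \<xi> \<eta> > 0 \<longleftrightarrow> \<xi> \<noteq> \<eta>"
    using W1pm_pos[OF assms(1,2)] W1pm_self[OF finite_supp(1)] by auto
  then show ?thesis
    using W1pm_nonneg W1pm_commute W1pm_triangle[OF finite_supp] by simp
qed

end
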